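(* Let $r$ be a positive integer and let $W_r$ be the $r$-grid. Let $\mathcal{T}$ be the natural tangle of $W_r$, i.e.\ the set of all separations $(A,B)$ of $W_r$ of order less than $r$ such that $B$ contains (the vertex set of) a cross of $W_r$. Then every separation $(A,B)\in\mathcal{T}$ satisfies $|A|\leq s^2$, where $s:=|A\cap B|$ is the order of $(A,B)$.
   Context: For a positive integer $r$, the $r$-grid $W_r$ is the graph with vertex set $\{(i,j):1\le i,j\le r\}$ in which $(i,j)$ and $(i',j')$ are adjacent if and only if $|i-i'|+|j-j'|=1$. For $1\le j\le r$ the set $\{1,\dots,r\}\times\{j\}$ is the $j$th column, and for $1\le i\le r$ the set $\{i\}\times\{1,\dots,r\}$ is the $i$th row; the union of any row with any column is a cross. A separation of a graph $G$ is a pair $(A,B)$ of vertex sets with $A\cup B=V(G)$ such that no edge of $G$ joins $A\setminus B$ to $B\setminus A$; its order is $|A\cap B|$. *)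

theory Defs
  imports Main
begin

definition grid_vertices :: "nat \<Rightarrow> (nat \<times> nat) set" where
  "grid_vertices r = {1..r} \<times> {1..r}"

definition grid_adj :: "nat \<Rightarrow> nat \<times> nat \<Rightarrow> nat \<times> nat \<Rightarrow> bool" where
  "grid_adj r v w \<longleftrightarrow> v \<in> grid_vertices r \<and> w \<in> grid_vertices r \<and>
     (let (i, j) = v; (i', j') = w in
       abs (int i - int i') + abs (int j - int j') = 1)"

definition grid_column :: "nat \<Rightarrow> nat \<Rightarrow> (nat \<times> nat) set" where
  "grid_column r j = {1..r} \<times> {j}"

definition grid_row :: "nat \<Rightarrow> nat \<Rightarrow> (nat \<times> nat) set" where
  "grid_row r i = {i} \<times> {1..r}"

definition grid_cross :: "nat \<Rightarrow> (nat \<times> nat) set \<Rightarrow> bool" where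
  "grid_cross r X \<longleftrightarrow> (\<exists>i\<in>{1..r}. \<exists>j\<in>{1..r}. X = grid_row r i \<union> grid_column r j)"

definition grid_separation :: "nat \<Rightarrow> (nat \<times> nat) set \<Rightarrow> (nat \<times> nat) set \<Rightarrow> bool" where
  "grid_separation r A B \<longleftrightarrow> A \<union> B = grid_vertices r \<and>
     (\<forall>v w. grid_adj r v w \<longrightarrow> \<not> (v \<in> A - B \<and> w \<in> B - A))"

definition sep_order :: "'a set \<Rightarrow> 'a set \<Rightarrow> nat" where
  "sep_order A B = card (A \<inter> B)"

definition natural_tangle :: "nat \<Rightarrow> ((nat \<times> nat) set \<times> (nat \<times> nat) set) set" where
  "natural_tangle r = {(A, B). grid_separation r A B \<and> sep_order A B < r \<and>
      (\<exists>X. grid_cross r X \<and> X \<subseteq> B)}"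

end

theory Submission
  imports Defs
begin

text \<open>Let \<open>(A, B)\<close> be in the tangle with \<open>B\<close> containing the cross through \<open>(i\<^sub>0, j\<^sub>0)\<close>, and put
  \<open>S = A \<inter> B\<close>. A vertex \<open>(i, j) \<in> A - B\<close> is joined to \<open>(i, j\<^sub>0) \<in> B\<close> along row \<open>i\<close>, so that row
  must meet \<open>S\<close>; likewise column \<open>j\<close> meets \<open>S\<close>. Hence \<open>A\<close> lies in the product of the row and column
  projections of \<open>S\<close>, which has at most \<open>|S|\<^sup>2\<close> elements.\<close>

lemma grid_adj_sym: "grid_adj r v w \<Longrightarrow> grid_adj r w v"
  by (auto simp: grid_adj_def split: prod.splits)

lemma grid_separation_adj_same_side:
  assumes sep: "grid_separation r A B" and adj: "grid_adj r v w"
    and "v \<notin> A \<inter> B" "w \<notin> A \<inter> B"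
  shows "v \<in> A \<longleftrightarrow> w \<in> A"
proof -
  have "v \<in> A \<union> B" "w \<in> A \<union> B"
    using sep adj by (auto simp: grid_separation_def grid_adj_def)
  moreover have "\<not> (v \<in> A - B \<and> w \<in> B - A)" "\<not> (w \<in> A - B \<and> v \<in> B - A)"
    using sep adj grid_adj_sym[OF adj] unfolding grid_separation_def by blast+
  ultimately show ?thesis using assms(3,4) by blast
qed

lemma grid_separation_walk_same_side:
  assumes sep: "grid_separation r A B"
    and walk: "\<forall>k<n. grid_adj r (f k) (f (Suc k))"
    and avoid: "\<forall>k\<le>n. f k \<notin> A \<inter> B"
  shows "f 0 \<in> A \<longleftrightarrow> f n \<in> A"
  using walk avoid
proof (induction n)
  case (Suc n)
  then have "f n \<in> A \<longleftrightarrow> f (Suc n) \<in> A"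
    by (intro grid_separation_adj_same_side[OF sep]) auto
  with Suc show ?case by auto
qed simp

lemma grid_separation_row_same_side:
  assumes sep: "grid_separation r A B"
    and avoid: "\<forall>y\<in>{1..r}. (i, y) \<notin> A \<inter> B"
    and "i \<in> {1..r}" "j \<in> {1..r}" "j' \<in> {1..r}"
  shows "(i, j) \<in> A \<longleftrightarrow> (i, j') \<in> A"
proof -
  have "(i, lo) \<in> A \<longleftrightarrow> (i, hi) \<in> A" if "lo \<le> hi" "lo \<in> {1..r}" "hi \<in> {1..r}" for lo hi
  proof -
    have "\<forall>k<hi - lo. grid_adj r (i, lo + k) (i, lo + Suc k)"
      using that assms(3) by (auto simp: grid_adj_def grid_vertices_def)
    moreover have "\<forall>k\<le>hi - lo. (i, lo + k) \<notin> A \<inter> B"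
      using that avoid by auto
    ultimately show ?thesis
      using grid_separation_walk_same_side[OF sep, of "hi - lo" "\<lambda>k. (i, lo + k)"] that by simp
  qed
  then show ?thesis
    using assms(4,5) by (metis nle_le)
qed

lemma grid_separation_column_same_side:
  assumes sep: "grid_separation r A B"
    and avoid: "\<forall>x\<in>{1..r}. (x, j) \<notin> A \<inter> B"
    and "j \<in> {1..r}" "i \<in> {1..r}" "i' \<in> {1..r}"
  shows "(i, j) \<in> A \<longleftrightarrow> (i', j) \<in> A"
proof -
  have "(lo, j) \<in> A \<longleftrightarrow> (hi, j) \<in> A" if "lo \<le> hi" "lo \<in> {1..r}" "hi \<in> {1..r}" for lo hi
  proof -
    have "\<forall>k<hi - lo. grid_adj r (lo + k, j) (lo + Suc k, j)"
      using that assms(3) by (auto simp: grid_adj_def grid_vertices_def)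
    moreover have "\<forall>k\<le>hi - lo. (lo + k, j) \<notin> A \<inter> B"
      using that avoid by auto
    ultimately show ?thesis
      using grid_separation_walk_same_side[OF sep, of "hi - lo" "\<lambda>k. (lo + k, j)"] that by simp
  qed
  then show ?thesis
    using assms(4,5) by (metis nle_le)
qed

lemma natural_tangle_side_subset_separator_projections:
  assumes "(A, B) \<in> natural_tangle r"
  shows "A \<subseteq> fst ` (A \<inter> B) \<times> snd ` (A \<inter> B)"
proof
  fix v assume "v \<in> A"
  have sep: "grid_separation r A B" using assms by (simp add: natural_tangle_def)
  obtain i0 j0 where ij0: "i0 \<in> {1..r}" "j0 \<in> {1..r}"
    and cross: "grid_row r i0 \<union> grid_column r j0 \<subseteq> B"
    using assms by (auto simp: natural_tangle_def grid_cross_def)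
  obtain i j where v: "v = (i, j)" by fastforce
  have ij: "i \<in> {1..r}" "j \<in> {1..r}"
    using \<open>v \<in> A\<close> sep v unfolding grid_separation_def grid_vertices_def by blast+
  show "v \<in> fst ` (A \<inter> B) \<times> snd ` (A \<inter> B)"
  proof (cases "v \<in> B")
    case True
    with \<open>v \<in> A\<close> have "v \<in> A \<inter> B" by blast
    then show ?thesis by (simp add: mem_Times_iff)
  next
    case False
    have "(i, j0) \<in> B" "(i0, j) \<in> B"
      using cross ij by (auto simp: grid_row_def grid_column_def)
    have "\<exists>y\<in>{1..r}. (i, y) \<in> A \<inter> B"
    proof (rule ccontr)
      assume avoid: "\<not> ?thesis"
      then have "(i, j0) \<in> A"
        using grid_separation_row_same_side[OF sep _ ij ij0(2)] \<open>v \<in> A\<close> v by blast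
      with \<open>(i, j0) \<in> B\<close> ij0(2) avoid show False by blast
    qed
    moreover have "\<exists>x\<in>{1..r}. (x, j) \<in> A \<inter> B"
    proof (rule ccontr)
      assume avoid: "\<not> ?thesis"
      then have "(i0, j) \<in> A"
        using grid_separation_column_same_side[OF sep _ ij(2,1) ij0(1)] \<open>v \<in> A\<close> v by blast
      with \<open>(i0, j) \<in> B\<close> ij0(1) avoid show False by blast
    qed
    ultimately show ?thesis
      using v by (force simp: mem_Times_iff)
  qed
qed

lemma card_le_square_if_subset_projections:
  assumes "finite S" "A \<subseteq> fst ` S \<times> snd ` S"
  shows "card A \<le> card S ^ 2"
proof -
  have "card A \<le> card (fst ` S \<times> snd ` S)"
    using assms by (intro card_mono) auto
  also have "\<dots> = card (fst ` S) * card (snd ` S)"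
    by (simp add: card_cartesian_product)
  also have "\<dots> \<le> card S * card S"
    using assms(1) by (intro mult_mono card_image_le) auto
  finally show ?thesis
    by (simp add: power2_eq_square)
qed

theorem lemma2:
  fixes r :: nat and A B :: "(nat \<times> nat) set"
  assumes "r > 0"
    and "(A, B) \<in> natural_tangle r"
  shows "card A \<le> (sep_order A B)^2"
proof -
  have "A \<union> B = grid_vertices r"
    using assms(2) by (simp add: natural_tangle_def grid_separation_def)
  then have "finite (A \<inter> B)"
    by (metis finite_Int finite_Un finite_SigmaI finite_atLeastAtMost grid_vertices_def)
  then show ?thesis
    using card_le_square_if_subset_projections natural_tangle_side_subset_separator_projections[OF assms(2)]
    by (simp add: sep_order_def)
qed

end
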